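(* Let $g=\begin{pmatrix}A&B\\C&D\end{pmatrix}\in SL_{2n+2}(\mathbb{C})$ with $A,B,C,D\in M_{n+1}(\mathbb{C})$ and $\det C\neq0$, acting on $\mathbb{P}^{2n+1}$. Then the pull-back of the volume form $dV$ satisfies $g^*dV=\mu_g^{4(n+1)}\,dV$, where $\mu_g(z)=\dfrac{\|z''\|}{\|Cz'+Dz''\|}$.
   Context: Write points of $\mathbb{P}^{2n+1}$ as $[z':z'']$ with $z'=(z^0,\dots,z^n)$, $z''=(z^{n+1},\dots,z^{2n+1})$; $\|\cdot\|$ is the Euclidean norm. Let $E=\mathbb{P}^{2n+1}\setminus\{z''=0\}$, covered by $U_\alpha=\{z^{n+\alpha}\neq0\}$, $1\leq\alpha\leq n+1$. On $U_\alpha$ use coordinates $\zeta_\alpha^j=z^j/z^{n+\alpha}$ ($0\le j\le n$), $x_\alpha^k=z^{n+k}/z^{n+\alpha}$ for $1\le k<\alpha$ and $x_\alpha^{k-1}=z^{n+k}/z^{n+\alpha}$ for $\alpha<k\le n+1$. Set $d\zeta_\alpha=d\zeta_\alpha^0\wedge\cdots\wedge d\zeta_\alpha^n$, $dx_\alpha=dx_\alpha^1\wedge\cdots\wedge dx_\alpha^n$, $\|x_\alpha\|^2=\sum_{k=1}^n|x_\alpha^k|^2$, and $dV=\sqrt{-1}(1+\|x_\alpha\|^2)^{-2(n+1)}d\zeta_\alpha\wedge\overline{d\zeta_\alpha}\wedge dx_\alpha\wedge\overline{dx_\alpha}$ on $U_\alpha$; these local forms agree on overlaps and define a global volume form $dV$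 on $E$. The identity is understood where both sides are defined. *)

theory Defs
  imports "HOL-Analysis.Analysis" "Jordan_Normal_Form.Determinant"
begin

text \<open>Points of P^(2n+1) are represented by homogeneous coordinate vectors
  z :: nat => complex (entries 0..2n+1 used).  Local coordinates on U_alpha are
  vectors w :: nat => complex with w 0..w n = zeta^0..zeta^n and
  w (n+k) = x^k for 1 <= k <= n.\<close>

definition chart_inv :: "nat \<Rightarrow> nat \<Rightarrow> (nat \<Rightarrow> complex) \<Rightarrow> (nat \<Rightarrow> complex)" where
  "chart_inv n \<alpha> w = (\<lambda>j. if j \<le> n then w j
       else if j = n + \<alpha> then 1
       else if n < j \<and> j < n + \<alpha> then w j
       else if n + \<alpha> < j \<and> j \<le> 2*n+1 then w (j - 1)
       else 0)"

definition chart :: "nat \<Rightarrow> nat \<Rightarrow> (nat \<Rightarrow> complex) \<Rightarrow> (nat \<Rightarrow> complex)" where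
  "chart n \<beta> z = (\<lambda>i. if i \<le> n then z i / z (n + \<beta>)
       else if n < i \<and> i < n + \<beta> then z i / z (n + \<beta>)
       else if n + \<beta> \<le> i \<and> i \<le> 2*n then z (i + 1) / z (n + \<beta>)
       else 0)"

definition lin_act :: "complex mat \<Rightarrow> nat \<Rightarrow> (nat \<Rightarrow> complex) \<Rightarrow> (nat \<Rightarrow> complex)" where
  "lin_act g N z = (\<lambda>i. if i < N then (\<Sum>j<N. g $$ (i, j) * z j) else 0)"

text \<open>Coefficient of dV in the local coordinates of any U_alpha:
  dV = sqrt(-1) * vol_density * dzeta /\ conj dzeta /\ dx /\ conj dx.\<close>
definition vol_density :: "nat \<Rightarrow> (nat \<Rightarrow> complex) \<Rightarrow> real" where
  "vol_density n w = 1 / (1 + (\<Sum>k\<in>{1..n}. (cmod (w (n + k)))\<^sup>2)) ^ (2*(n+1))"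

definition jac_det :: "nat \<Rightarrow> ((nat \<Rightarrow> complex) \<Rightarrow> (nat \<Rightarrow> complex)) \<Rightarrow> (nat \<Rightarrow> complex) \<Rightarrow> complex" where
  "jac_det N F w = det (mat N N (\<lambda>(i, j). deriv (\<lambda>t. F (w(j := t)) i) (w j)))"

definition mu :: "nat \<Rightarrow> complex mat \<Rightarrow> (nat \<Rightarrow> complex) \<Rightarrow> real" where
  "mu n g z =
     sqrt (\<Sum>i\<le>n. (cmod (z (n + 1 + i)))\<^sup>2) /
     sqrt (\<Sum>i\<le>n. (cmod ((\<Sum>j\<le>n. g $$ (n + 1 + i, j) * z j)
                           + (\<Sum>j\<le>n. g $$ (n + 1 + i, n + 1 + j) * z (n + 1 + j))))\<^sup>2)"

end

theory Submission
  imports Defs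
begin

text \<open>With \<open>z = \<psi>\<^sub>\<alpha>(w)\<close>, whose entry at \<open>a = n + \<alpha>\<close> is 1, and \<open>y = g z\<close>, the map reads
  \<open>w \<mapsto> (y\<^sub>i / y\<^sub>b)\<close>, \<open>i \<noteq> b = n + \<beta>\<close>. Its Jacobian matrix has entries
  \<open>(g\<^sub>i\<^sub>j y\<^sub>b - y\<^sub>i g\<^sub>b\<^sub>j) / y\<^sub>b\<^sup>2\<close> with \<open>i \<noteq> b\<close>, \<open>j \<noteq> a\<close>. Replacing column \<open>a\<close> of \<open>g\<close> by
  \<open>y = g z\<close> and then clearing that column against row \<open>b\<close> are unitriangular operations that
  produce a block triangular matrix, so \<open>det J = \<plusminus>det g / y\<^sub>b ^ (2n+2)\<close>. The density of \<open>dV\<close> is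
  \<open>\<parallel>z''\<parallel> ^ (-4(n+1))\<close> at \<open>w\<close> and \<open>(|y\<^sub>b|\<^sup>2 / \<parallel>y''\<parallel>\<^sup>2) ^ (2(n+1))\<close> at the image, so both sides
  equal \<open>\<parallel>y''\<parallel> ^ (-4(n+1))\<close>.\<close>

lemma det_mat_upper_unitriangular:
  fixes f :: "nat \<times> nat \<Rightarrow> 'a::comm_ring_1"
  assumes "\<And>i j. j < i \<Longrightarrow> i < n \<Longrightarrow> f (i, j) = 0"
    and "\<And>i. i < n \<Longrightarrow> f (i, i) = 1"
  shows "det (mat n n f) = 1"
proof -
  have "det (mat n n f) = prod_list (diag_mat (mat n n f))"
    by (rule det_upper_triangular) (auto simp: upper_triangular_def assms(1))
  also have "\<dots> = 1"
    using assms(2) by (simp add: prod_list_diag_prod)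
  finally show ?thesis .
qed

lemma det_permute_rows_cols:
  assumes A: "A \<in> carrier_mat n n" and p: "p permutes {0..<n}" and q: "q permutes {0..<n}"
  shows "det (mat n n (\<lambda>(i, j). A $$ (p i, q j))) = signof p * signof q * det A"
proof -
  have pn: "p i < n" and qn: "q i < n" if "i < n" for i
    using permutes_in_image[OF p] permutes_in_image[OF q] that by auto
  define B where "B = mat n n (\<lambda>(i, j). A $$ (i, q j))"
  have B: "B \<in> carrier_mat n n" by (simp add: B_def)
  have At: "transpose_mat A \<in> carrier_mat n n" using A by simp
  have "mat n n (\<lambda>(i, j). A $$ (p i, q j)) = mat n n (\<lambda>(i, j). B $$ (p i, j))"
    by (rule eq_matI) (simp_all add: B_def pn)
  then have "det (mat n n (\<lambda>(i, j). A $$ (p i, q j))) = signof p * det B"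
    using det_permute_rows[OF B p] by simp
  moreover have "det B = signof q * det A"
  proof -
    have "transpose_mat B = mat n n (\<lambda>(i, j). transpose_mat A $$ (q i, j))"
      using A by (intro eq_matI) (simp_all add: B_def qn)
    then show ?thesis
      using det_permute_rows[OF At q] det_transpose[OF A] det_transpose[OF B] by simp
  qed
  ultimately show ?thesis
    by (simp add: ac_simps)
qed

lemma det_dehomogenized_jacobian:
  fixes G :: "'a::field mat"
  assumes G: "G \<in> carrier_mat (Suc N) (Suc N)"
    and x: "x N = 1"
    and y: "\<And>i. i < Suc N \<Longrightarrow> y i = (\<Sum>j<Suc N. G $$ (i, j) * x j)"
    and yN: "y N \<noteq> 0"
  shows "det (mat N N (\<lambda>(i, j). (G $$ (i, j) * y N - y i * G $$ (N, j)) / (y N)\<^sup>2))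
       = det G / y N ^ Suc N"
proof -
  \<comment> \<open>\<open>K\<close> replaces the last column of \<open>G\<close> by \<open>y = G x\<close>, \<open>P\<close> subtracts \<open>y\<^sub>i / y\<^sub>N\<close> times
    row \<open>N\<close> from row \<open>i\<close>; both are unitriangular and \<open>P G K\<close> is block lower triangular
    with diagonal blocks \<open>y\<^sub>N J\<close> and \<open>y\<^sub>N\<close>.\<close>
  define K where "K = mat (Suc N) (Suc N) (\<lambda>(i, j). if j < N then (if i = j then 1 else 0) else x i)"
  define P where "P = mat (Suc N) (Suc N)
    (\<lambda>(i, j). (if j = i then 1 else 0) - (if i < N \<and> j = N then y i / y N else 0))"
  define A where "A = mat N N (\<lambda>(i, j). G $$ (i, j) - y i / y N * G $$ (N, j))"
  define E where "E = four_block_mat A (0\<^sub>m N 1) (mat 1 N (\<lambda>(_, j). G $$ (N, j))) (mat 1 1 (\<lambda>_. y N))"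
  have K: "K \<in> carrier_mat (Suc N) (Suc N)" and P: "P \<in> carrier_mat (Suc N) (Suc N)"
    by (simp_all add: K_def P_def)
  have GK: "(G * K) $$ (i, j) = (if j < N then G $$ (i, j) else y i)"
    if "i < Suc N" "j < Suc N" for i j
    using that G by (auto simp: K_def scalar_prod_def lessThan_atLeast0[symmetric] y
        if_distrib[of "\<lambda>c. _ * c"] sum.delta' cong: if_cong)
  have "P * (G * K) = E"
  proof (rule eq_matI)
    fix i j assume "i < dim_row E" "j < dim_col E"
    then have i: "i < Suc N" and j: "j < Suc N" by (auto simp: E_def A_def)
    have "(P * (G * K)) $$ (i, j) = (\<Sum>k<Suc N. P $$ (i, k) * (G * K) $$ (k, j))"
      using i j G K P by (simp add: scalar_prod_def lessThan_atLeast0)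
    also have "\<dots> = (G * K) $$ (i, j) - (if i < N then y i / y N * (G * K) $$ (N, j) else 0)"
      using i by (simp add: P_def left_diff_distrib sum_subtractf sum.delta'
          if_distrib[of "\<lambda>c. c * _"] cong: if_cong)
    also have "\<dots> = E $$ (i, j)"
      using i j yN by (cases "i < N"; cases "j < N") (auto simp: GK E_def A_def less_Suc_eq)
    finally show "(P * (G * K)) $$ (i, j) = E $$ (i, j)" .
  qed (use G K P in \<open>auto simp: E_def A_def\<close>)
  moreover have "det P = 1"
    unfolding P_def by (rule det_mat_upper_unitriangular) auto
  moreover have "det K = 1"
    unfolding K_def by (rule det_mat_upper_unitriangular) (auto simp: x less_Suc_eq)
  ultimately have "det E = det G"
    using det_mult[OF P mult_carrier_mat[OF G K]] det_mult[OF G K] by simp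
  moreover have "det E = det A * y N"
    unfolding E_def by (subst det_four_block_mat_upper_right_zero_col[of _ N])
      (auto simp: A_def det_single)
  moreover have "mat N N (\<lambda>(i, j). (G $$ (i, j) * y N - y i * G $$ (N, j)) / (y N)\<^sup>2)
      = (1 / y N) \<cdot>\<^sub>m A"
    using yN by (auto simp: A_def field_simps power2_eq_square)
  ultimately show ?thesis
    using yN by (simp add: A_def field_simps power_one_over)
qed

lemma det_dehomogenized_jacobian_permuted:
  fixes g :: "'a::field mat"
  assumes g: "g \<in> carrier_mat (Suc N) (Suc N)"
    and p: "p permutes {0..<Suc N}" and q: "q permutes {0..<Suc N}"
    and z: "z (q N) = 1"
    and y: "\<And>i. i < Suc N \<Longrightarrow> y i = (\<Sum>j<Suc N. g $$ (i, j) * z j)"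
    and y_nz: "y (p N) \<noteq> 0"
  shows "det (mat N N (\<lambda>(i, j).
            (g $$ (p i, q j) * y (p N) - y (p i) * g $$ (p N, q j)) / (y (p N))\<^sup>2))
       = signof p * signof q * det g / y (p N) ^ Suc N"
proof -
  define G where "G = mat (Suc N) (Suc N) (\<lambda>(i, j). g $$ (p i, q j))"
  have yp: "y (p i) = (\<Sum>j<Suc N. G $$ (i, j) * z (q j))" if "i < Suc N" for i
  proof -
    have "y (p i) = (\<Sum>j\<in>{0..<Suc N}. g $$ (p i, j) * z j)"
      using y permutes_in_image[OF p] that by (simp add: lessThan_atLeast0)
    also have "\<dots> = (\<Sum>j\<in>{0..<Suc N}. g $$ (p i, q j) * z (q j))"
      using sum.permute[OF q] by (simp add: comp_def)
    finally show ?thesis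
      using that by (simp add: G_def lessThan_atLeast0)
  qed
  have "det (mat N N (\<lambda>(i, j). (G $$ (i, j) * y (p N) - y (p i) * G $$ (N, j)) / (y (p N))\<^sup>2))
      = det G / y (p N) ^ Suc N"
    by (rule det_dehomogenized_jacobian[where x = "z \<circ> q"]) (use z yp y_nz in \<open>auto simp: G_def\<close>)
  moreover have "mat N N (\<lambda>(i, j). (G $$ (i, j) * y (p N) - y (p i) * G $$ (N, j)) / (y (p N))\<^sup>2)
      = mat N N (\<lambda>(i, j). (g $$ (p i, q j) * y (p N) - y (p i) * g $$ (p N, q j)) / (y (p N))\<^sup>2)"
    by (rule eq_matI) (simp_all add: G_def)
  moreover have "det G = signof p * signof q * det g"
    unfolding G_def by (rule det_permute_rows_cols[OF g p q])
  ultimately show ?thesis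
    by simp
qed

definition skip_index :: "nat \<Rightarrow> nat \<Rightarrow> nat" where
  "skip_index b i = (if i < b then i else Suc i)"

lemma permutes_skip_index:
  assumes "b \<le> N"
  shows "(\<lambda>i. if i < N then skip_index b i else if i = N then b else i) permutes {0..<Suc N}"
    (is "?p permutes ?S")
proof (rule bij_imp_permutes)
  have inj: "inj_on ?p ?S"
    using assms by (auto simp: inj_on_def skip_index_def split: if_splits)
  moreover have "?p ` ?S \<subseteq> ?S"
    using assms by (auto simp: skip_index_def)
  ultimately show "bij_betw ?p ?S ?S"
    unfolding bij_betw_def using endo_inj_surj[of ?S ?p] by blast
qed auto

lemma norm_det_dehomogenized_jacobian_skip:
  fixes g :: "'a::real_normed_field mat"
  assumes g: "g \<in> carrier_mat (Suc N) (Suc N)"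
    and a: "a \<le> N" and b: "b \<le> N"
    and z: "z a = 1"
    and y: "\<And>i. i < Suc N \<Longrightarrow> y i = (\<Sum>j<Suc N. g $$ (i, j) * z j)"
    and y_nz: "y b \<noteq> 0"
  shows "norm (det (mat N N (\<lambda>(i, j). (g $$ (skip_index b i, skip_index a j) * y b
            - y (skip_index b i) * g $$ (b, skip_index a j)) / (y b)\<^sup>2)))
       = norm (det g) / norm (y b) ^ Suc N"
proof -
  define p where "p i = (if i < N then skip_index b i else if i = N then b else i)" for i
  define q where "q i = (if i < N then skip_index a i else if i = N then a else i)" for i
  have p: "p permutes {0..<Suc N}" and q: "q permutes {0..<Suc N}"
    unfolding p_def q_def using permutes_skip_index a b by blast+
  have "det (mat N N (\<lambda>(i, j). (g $$ (skip_index b i, skip_index a j) * y b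
            - y (skip_index b i) * g $$ (b, skip_index a j)) / (y b)\<^sup>2))
      = det (mat N N (\<lambda>(i, j). (g $$ (p i, q j) * y (p N) - y (p i) * g $$ (p N, q j)) / (y (p N))\<^sup>2))"
    by (intro arg_cong[where f = det] eq_matI) (simp_all add: p_def q_def)
  also have "\<dots> = signof p * signof q * det g / y (p N) ^ Suc N"
    by (rule det_dehomogenized_jacobian_permuted[OF g p q]) (simp_all add: p_def q_def z y y_nz)
  moreover have "\<bar>real_of_int (sign r)\<bar> = 1" for r :: "nat \<Rightarrow> nat"
    by (metis abs_sign of_int_abs of_int_1)
  ultimately show ?thesis
    by (simp add: p_def norm_divide norm_mult norm_power)
qed

lemma chart_eq_skip_index:
  assumes "i < 2*n+1" "\<beta> \<in> {1..n+1}"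
  shows "chart n \<beta> v i = v (skip_index (n+\<beta>) i) / v (n+\<beta>)"
  using assms by (auto simp: chart_def skip_index_def)

lemma chart_inv_fun_upd:
  assumes "j < 2*n+1" "\<alpha> \<in> {1..n+1}"
  shows "chart_inv n \<alpha> (w(j := t)) = (chart_inv n \<alpha> w)(skip_index (n+\<alpha>) j := t)"
  using assms by (auto simp: chart_inv_def skip_index_def fun_eq_iff)

lemma chart_inv_skip_index:
  assumes "j < 2*n+1" "\<alpha> \<in> {1..n+1}"
  shows "chart_inv n \<alpha> w (skip_index (n+\<alpha>) j) = w j"
  using assms by (auto simp: chart_inv_def skip_index_def)

lemma chart_inv_base_point:
  assumes "1 \<le> \<alpha>"
  shows "chart_inv n \<alpha> w (n+\<alpha>) = 1"
  using assms by (simp add: chart_inv_def)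

lemma lin_act_fun_upd:
  assumes "k < N" "p < N"
  shows "lin_act g N (z(p := t)) k = lin_act g N z k + g $$ (k, p) * (t - z p)"
proof -
  have "(\<Sum>l<N. g $$ (k, l) * (z(p := t)) l)
      = (\<Sum>l<N. g $$ (k, l) * z l + (if l = p then g $$ (k, l) * (t - z p) else 0))"
    by (rule sum.cong) (auto simp: algebra_simps)
  then show ?thesis
    using assms by (simp add: lin_act_def sum.distrib)
qed

lemma deriv_affine_quotient:
  fixes A a B c t\<^sub>0 :: complex
  assumes "B \<noteq> 0"
  shows "deriv (\<lambda>t. (A + a * (t - t\<^sub>0)) / (B + c * (t - t\<^sub>0))) t\<^sub>0 = (a * B - A * c) / B\<^sup>2"
  by (rule DERIV_imp_deriv) (auto intro!: derivative_eq_intros simp: assms power2_eq_square)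

lemma deriv_chart_lin_act_chart_inv:
  fixes g :: "complex mat" and n \<alpha> \<beta> :: nat and w :: "nat \<Rightarrow> complex"
  defines "y \<equiv> lin_act g (2*n+2) (chart_inv n \<alpha> w)" and "a \<equiv> n+\<alpha>" and "b \<equiv> n+\<beta>"
  assumes "\<alpha> \<in> {1..n+1}" "\<beta> \<in> {1..n+1}" and "y b \<noteq> 0"
    and "i < 2*n+1" "j < 2*n+1"
  shows "deriv (\<lambda>t. chart n \<beta> (lin_act g (2*n+2) (chart_inv n \<alpha> (w(j := t)))) i) (w j)
       = (g $$ (skip_index b i, skip_index a j) * y b
            - y (skip_index b i) * g $$ (b, skip_index a j)) / (y b)\<^sup>2"
proof -
  have "skip_index b i < 2*n+2" "b < 2*n+2" "skip_index a j < 2*n+2"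
    using assms by (auto simp: skip_index_def)
  then have "chart n \<beta> (lin_act g (2*n+2) (chart_inv n \<alpha> (w(j := t)))) i
      = (y (skip_index b i) + g $$ (skip_index b i, skip_index a j) * (t - w j))
        / (y b + g $$ (b, skip_index a j) * (t - w j))" for t
    using assms by (simp add: chart_eq_skip_index chart_inv_fun_upd lin_act_fun_upd chart_inv_skip_index)
  then show ?thesis
    using deriv_affine_quotient[OF \<open>y b \<noteq> 0\<close>] by simp
qed

lemma norm_jac_det_chart_lin_act_chart_inv:
  fixes g :: "complex mat" and n \<alpha> \<beta> :: nat and w :: "nat \<Rightarrow> complex"
  defines "y \<equiv> lin_act g (2*n+2) (chart_inv n \<alpha> w)"
  assumes g: "g \<in> carrier_mat (2*n+2) (2*n+2)"
    and \<alpha>: "\<alpha> \<in> {1..n+1}" and \<beta>: "\<beta> \<in> {1..n+1}" and y_nz: "y (n+\<beta>) \<noteq> 0"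
  shows "cmod (jac_det (2*n+1) (\<lambda>v. chart n \<beta> (lin_act g (2*n+2) (chart_inv n \<alpha> v))) w)
       = cmod (det g) / cmod (y (n+\<beta>)) ^ (2*n+2)"
proof -
  note partial_deriv = deriv_chart_lin_act_chart_inv[OF \<alpha> \<beta> y_nz[unfolded y_def]]
  have "jac_det (2*n+1) (\<lambda>v. chart n \<beta> (lin_act g (2*n+2) (chart_inv n \<alpha> v))) w
      = det (mat (2*n+1) (2*n+1) (\<lambda>(i, j). (g $$ (skip_index (n+\<beta>) i, skip_index (n+\<alpha>) j) * y (n+\<beta>)
            - y (skip_index (n+\<beta>) i) * g $$ (n+\<beta>, skip_index (n+\<alpha>) j)) / (y (n+\<beta>))\<^sup>2))"
    unfolding jac_det_def y_def using partial_deriv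
    by (intro arg_cong[where f = det] eq_matI) simp_all
  also have "cmod \<dots> = cmod (det g) / cmod (y (n+\<beta>)) ^ Suc (2*n+1)"
    using g \<alpha> \<beta> y_nz
    by (intro norm_det_dehomogenized_jacobian_skip[where z = "chart_inv n \<alpha> w"])
      (auto simp: chart_inv_base_point lin_act_def y_def)
  finally show ?thesis by simp
qed

definition sqnorm_z2 :: "nat \<Rightarrow> (nat \<Rightarrow> complex) \<Rightarrow> real" where
  "sqnorm_z2 n z = (\<Sum>i\<le>n. (cmod (z (n+1+i)))\<^sup>2)"

lemma sum_z2_split:
  fixes f :: "nat \<Rightarrow> 'a::comm_monoid_add"
  assumes c: "c \<in> {1..n+1}"
  shows "(\<Sum>i\<le>n. f (n+1+i)) = f (n+c) + (\<Sum>k\<in>{1..n}. f (skip_index (n+c) (n+k)))"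
proof -
  have "(\<Sum>i\<le>n. f (n+1+i)) = (\<Sum>m\<in>{n+1..2*n+1}. f m)"
    by (rule sum.reindex_bij_witness[where i = "\<lambda>m. m - (n+1)" and j = "\<lambda>i. n+1+i"]) auto
  also have "\<dots> = f (n+c) + (\<Sum>m\<in>{n+1..2*n+1} - {n+c}. f m)"
    using c by (subst sum.remove[of _ "n+c"]) auto
  also have "(\<Sum>m\<in>{n+1..2*n+1} - {n+c}. f m) = (\<Sum>k\<in>{1..n}. f (skip_index (n+c) (n+k)))"
    by (rule sum.reindex_bij_witness[where i = "\<lambda>k. skip_index (n+c) (n+k)"
          and j = "\<lambda>m. if m < n+c then m-n else m-n-1"]) (use c in \<open>auto simp: skip_index_def\<close>)
  finally show ?thesis .
qed

lemma sqnorm_z2_split: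
  assumes "\<beta> \<in> {1..n+1}"
  shows "sqnorm_z2 n z = (cmod (z (n+\<beta>)))\<^sup>2 + (\<Sum>k\<in>{1..n}. (cmod (z (skip_index (n+\<beta>) (n+k))))\<^sup>2)"
  unfolding sqnorm_z2_def by (rule sum_z2_split[OF assms])

lemma sqnorm_z2_ge:
  assumes "\<beta> \<in> {1..n+1}"
  shows "(cmod (z (n+\<beta>)))\<^sup>2 \<le> sqnorm_z2 n z"
  unfolding sqnorm_z2_split[OF assms] by (simp add: sum_nonneg)

lemma vol_density_chart:
  assumes \<beta>: "\<beta> \<in> {1..n+1}" and v: "v (n+\<beta>) \<noteq> 0"
  shows "vol_density n (chart n \<beta> v) = ((cmod (v (n+\<beta>)))\<^sup>2 / sqnorm_z2 n v) ^ (2*(n+1))"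
proof -
  have "(\<Sum>k\<in>{1..n}. (cmod (chart n \<beta> v (n+k)))\<^sup>2)
      = (\<Sum>k\<in>{1..n}. (cmod (v (skip_index (n+\<beta>) (n+k))))\<^sup>2) / (cmod (v (n+\<beta>)))\<^sup>2"
    unfolding sum_divide_distrib using \<beta>
    by (intro sum.cong) (auto simp: chart_eq_skip_index norm_divide power_divide)
  also have "\<dots> = (sqnorm_z2 n v - (cmod (v (n+\<beta>)))\<^sup>2) / (cmod (v (n+\<beta>)))\<^sup>2"
    unfolding sqnorm_z2_split[OF \<beta>] by simp
  finally have "1 + (\<Sum>k\<in>{1..n}. (cmod (chart n \<beta> v (n+k)))\<^sup>2) = sqnorm_z2 n v / (cmod (v (n+\<beta>)))\<^sup>2"
    using v by (simp add: field_simps)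
  then show ?thesis
    by (simp only: vol_density_def power_divide) simp
qed

lemma vol_density_eq_chart_inv:
  assumes \<alpha>: "\<alpha> \<in> {1..n+1}"
  shows "vol_density n w = 1 / sqnorm_z2 n (chart_inv n \<alpha> w) ^ (2*(n+1))"
proof -
  have "chart n \<alpha> (chart_inv n \<alpha> w) (n+k) = w (n+k)" if "k \<in> {1..n}" for k
    using that \<alpha> by (simp add: chart_eq_skip_index chart_inv_skip_index chart_inv_base_point)
  then have "vol_density n w = vol_density n (chart n \<alpha> (chart_inv n \<alpha> w))"
    unfolding vol_density_def by simp
  also have "\<dots> = 1 / sqnorm_z2 n (chart_inv n \<alpha> w) ^ (2*(n+1))"
    using \<alpha> by (simp add: vol_density_chart chart_inv_base_point power_one_over)
  finally show ?thesis .
qed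

lemma mu_eq_sqnorm_z2:
  "mu n g z = sqrt (sqnorm_z2 n z) / sqrt (sqnorm_z2 n (lin_act g (2*n+2) z))"
proof -
  have split: "(\<Sum>l<2*n+2. h l) = (\<Sum>j\<le>n. h j) + (\<Sum>j\<le>n. h (n+1+j))" for h :: "nat \<Rightarrow> complex"
  proof -
    have "{..<2*n+2} = {..n} \<union> {n+1..2*n+1}"
      by auto
    then have "(\<Sum>l<2*n+2. h l) = (\<Sum>j\<le>n. h j) + (\<Sum>m\<in>{n+1..2*n+1}. h m)"
      by (simp add: sum.union_disjoint)
    also have "(\<Sum>m\<in>{n+1..2*n+1}. h m) = (\<Sum>j\<le>n. h (n+1+j))"
      by (rule sum.reindex_bij_witness[where j = "\<lambda>m. m - (n+1)" and i = "\<lambda>j. n+1+j"]) auto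
    finally show ?thesis .
  qed
  then have "(\<Sum>j\<le>n. g $$ (n+1+i, j) * z j) + (\<Sum>j\<le>n. g $$ (n+1+i, n+1+j) * z (n+1+j))
      = lin_act g (2*n+2) z (n+1+i)" if "i \<le> n" for i
    using that split[of "\<lambda>l. g $$ (n+1+i, l) * z l"] by (simp add: lin_act_def)
  then show ?thesis
    by (simp add: mu_def sqnorm_z2_def)
qed

lemma vol_density_chart_mult_norm_jac_det:
  fixes g :: "complex mat" and n \<alpha> \<beta> :: nat and w :: "nat \<Rightarrow> complex"
  defines "y \<equiv> lin_act g (2*n+2) (chart_inv n \<alpha> w)"
  assumes g: "g \<in> carrier_mat (2*n+2) (2*n+2)" and det_g: "cmod (det g) = 1"
    and \<alpha>: "\<alpha> \<in> {1..n+1}" and \<beta>: "\<beta> \<in> {1..n+1}" and y_nz: "y (n+\<beta>) \<noteq> 0"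
  shows "vol_density n (chart n \<beta> y)
           * (cmod (jac_det (2*n+1) (\<lambda>v. chart n \<beta> (lin_act g (2*n+2) (chart_inv n \<alpha> v))) w))\<^sup>2
         = 1 / sqnorm_z2 n y ^ (2*(n+1))"
proof -
  define B where "B = (cmod (y (n+\<beta>)))\<^sup>2"
  have "0 < B"
    using y_nz by (simp add: B_def)
  have "(cmod (jac_det (2*n+1) (\<lambda>v. chart n \<beta> (lin_act g (2*n+2) (chart_inv n \<alpha> v))) w))\<^sup>2
      = 1 / B ^ (2*(n+1))"
    using norm_jac_det_chart_lin_act_chart_inv[OF g \<alpha> \<beta>] y_nz det_g
    by (simp add: B_def y_def power_one_over power_mult_distrib flip: power_mult)
  moreover have "vol_density n (chart n \<beta> y) = (B / sqnorm_z2 n y) ^ (2*(n+1))"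
    using vol_density_chart[OF \<beta>, of y] y_nz by (simp add: B_def)
  ultimately show ?thesis
    using \<open>0 < B\<close> by (simp add: power_divide)
qed

lemma mu_power_mult_vol_density:
  assumes \<alpha>: "\<alpha> \<in> {1..n+1}"
  shows "mu n g (chart_inv n \<alpha> w) ^ (4*(n+1)) * vol_density n w
       = 1 / sqnorm_z2 n (lin_act g (2*n+2) (chart_inv n \<alpha> w)) ^ (2*(n+1))"
proof -
  define Y where "Y = sqnorm_z2 n (lin_act g (2*n+2) (chart_inv n \<alpha> w))"
  define Z where "Z = sqnorm_z2 n (chart_inv n \<alpha> w)"
  have "0 \<le> Y" "1 \<le> Z"
    using sqnorm_z2_ge[OF \<alpha>, of "chart_inv n \<alpha> w"] \<alpha>
    by (simp_all add: Y_def Z_def sqnorm_z2_def sum_nonneg chart_inv_base_point)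
  have "mu n g (chart_inv n \<alpha> w) ^ (4*(n+1)) = ((sqrt Z / sqrt Y)\<^sup>2) ^ (2*(n+1))"
    by (simp add: mu_eq_sqnorm_z2 Y_def Z_def power_add flip: power_mult)
  also have "\<dots> = (Z / Y) ^ (2*(n+1))"
    using \<open>0 \<le> Y\<close> \<open>1 \<le> Z\<close> by (simp add: power_divide)
  finally show ?thesis
    using vol_density_eq_chart_inv[OF \<alpha>] \<open>1 \<le> Z\<close> by (simp add: Y_def Z_def power_divide)
qed

theorem lemma7p2:
  fixes n :: nat and g :: "complex mat" and \<alpha> \<beta> :: nat and w :: "nat \<Rightarrow> complex"
  assumes "g \<in> carrier_mat (2*n+2) (2*n+2)"
    and "det g = 1"
    and "det (mat (n+1) (n+1) (\<lambda>(i, j). g $$ (n + 1 + i, j))) \<noteq> 0"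
    and "\<alpha> \<in> {1..n+1}" and "\<beta> \<in> {1..n+1}"
    and "lin_act g (2*n+2) (chart_inv n \<alpha> w) (n + \<beta>) \<noteq> 0"
  shows "vol_density n (chart n \<beta> (lin_act g (2*n+2) (chart_inv n \<alpha> w)))
           * (cmod (jac_det (2*n+1) (\<lambda>v. chart n \<beta> (lin_act g (2*n+2) (chart_inv n \<alpha> v))) w))\<^sup>2
         = (mu n g (chart_inv n \<alpha> w)) ^ (4*(n+1)) * vol_density n w"
proof -
  have "cmod (det g) = 1"
    using assms(2) by simp
  then show ?thesis
    using vol_density_chart_mult_norm_jac_det[OF assms(1) _ assms(4,5,6)]
      mu_power_mult_vol_density[OF assms(4)]
    by simp
qed

end
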